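(* In every T2R semigroup $S=S_0\cup S_1$ with $S_1=\{u,v\}$, there is an element $b\in S_0$ such that $ub\neq b$ and $vb\neq b$.
   Context: A semigroup $S$ is a $\Delta$-semigroup if the lattice of all congruences of $S$ is a chain with respect to inclusion. A semigroup $N$ with zero $0$ is nil if every element has some power equal to $0$; non-trivial means having more than one element. A T2R semigroup is a $\Delta$-semigroup $S$ which is the disjoint union of a non-trivial nil ideal $S_0$ (with zero $0$, which is then the zero of $S$) and a subsemigroup $S_1=\{u,v\}$, $u\neq v$, which is a right zero semigroup ($xy=y$ for $x,y\in S_1$). *)

theory Defs
  imports Main
begin

definition semigroup_on :: "'a set \<Rightarrow> ('a \<Rightarrow> 'a \<Rightarrow> 'a) \<Rightarrow> bool" where
  "semigroup_on S mult \<longleftrightarrow>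
     (\<forall>x\<in>S. \<forall>y\<in>S. mult x y \<in> S) \<and>
     (\<forall>x\<in>S. \<forall>y\<in>S. \<forall>z\<in>S. mult (mult x y) z = mult x (mult y z))"

definition congruence_on :: "'a set \<Rightarrow> ('a \<Rightarrow> 'a \<Rightarrow> 'a) \<Rightarrow> ('a \<times> 'a) set \<Rightarrow> bool" where
  "congruence_on S mult r \<longleftrightarrow> equiv S r \<and>
     (\<forall>a b s. (a, b) \<in> r \<and> s \<in> S \<longrightarrow> (mult s a, mult s b) \<in> r \<and> (mult a s, mult b s) \<in> r)"

definition delta_semigroup :: "'a set \<Rightarrow> ('a \<Rightarrow> 'a \<Rightarrow> 'a) \<Rightarrow> bool" where
  "delta_semigroup S mult \<longleftrightarrow> semigroup_on S mult \<and>
     (\<forall>r1 r2. congruence_on S mult r1 \<and> congruence_on S mult r2 \<longrightarrow> r1 \<subseteq> r2 \<or> r2 \<subseteq> r1)"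

text \<open>spow mult x n = x^(n+1) (positive powers in a semigroup).\<close>
primrec spow :: "('a \<Rightarrow> 'a \<Rightarrow> 'a) \<Rightarrow> 'a \<Rightarrow> nat \<Rightarrow> 'a" where
  "spow mult x 0 = x"
| "spow mult x (Suc n) = mult (spow mult x n) x"

definition T2R :: "'a set \<Rightarrow> ('a \<Rightarrow> 'a \<Rightarrow> 'a) \<Rightarrow> 'a set \<Rightarrow> 'a \<Rightarrow> 'a \<Rightarrow> 'a \<Rightarrow> bool" where
  "T2R S mult S0 z u v \<longleftrightarrow>
     delta_semigroup S mult \<and>
     S = S0 \<union> {u, v} \<and> S0 \<inter> {u, v} = {} \<and> u \<noteq> v \<and>
     \<comment> \<open>S0 is an ideal of S\<close>
     (\<forall>x\<in>S0. \<forall>s\<in>S. mult s x \<in> S0 \<and> mult x s \<in> S0) \<and>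
     \<comment> \<open>z is the zero of S0\<close>
     z \<in> S0 \<and> (\<forall>x\<in>S0. mult z x = z \<and> mult x z = z) \<and>
     \<comment> \<open>S0 is nil\<close>
     (\<forall>x\<in>S0. \<exists>n. spow mult x n = z) \<and>
     \<comment> \<open>S0 is non-trivial\<close>
     (\<exists>x\<in>S0. x \<noteq> z) \<and>
     \<comment> \<open>{u,v} is a right zero semigroup\<close>
     (\<forall>x\<in>{u, v}. \<forall>y\<in>{u, v}. mult x y = y)"

end

theory Submission
  imports Defs
begin

text \<open>Suppose every element of the nil ideal \<open>S\<^sub>0\<close> is fixed by \<open>u\<close> or by \<open>v\<close>. Since
\<open>vu = u\<close> and \<open>uv = v\<close>, each of them then fixes all of \<open>S\<^sub>0\<close>, so \<open>u\<close> and \<open>v\<close> induce the same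
left translation of \<open>S\<close>. Thus the kernel of left translations is a congruence containing
\<open>(u, v)\<close>, while the Rees congruence of \<open>S\<^sub>0\<close> does not; as the congruences form a chain, the
Rees congruence lies in the kernel, which forces \<open>S\<^sub>0 S = {0}\<close>. But then both identifying \<open>0\<close>
with some \<open>b \<noteq> 0\<close> of \<open>S\<^sub>0\<close> and identifying \<open>u\<close> with \<open>v\<close> are congruences, and they are
incomparable.\<close>

lemma congruence_onI:
  assumes "r \<subseteq> S \<times> S" "\<And>x. x \<in> S \<Longrightarrow> (x, x) \<in> r"
    and "\<And>x y. (x, y) \<in> r \<Longrightarrow> (y, x) \<in> r"
    and "\<And>x y w. (x, y) \<in> r \<Longrightarrow> (y, w) \<in> r \<Longrightarrow> (x, w) \<in> r"
    and "\<And>a b s. (a, b) \<in> r \<Longrightarrow> s \<in> S \<Longrightarrow> (mult s a, mult s b) \<in> r"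
    and "\<And>a b s. (a, b) \<in> r \<Longrightarrow> s \<in> S \<Longrightarrow> (mult a s, mult b s) \<in> r"
  shows "congruence_on S mult r"
  unfolding congruence_on_def equiv_def
proof (intro conjI allI impI)
  show "refl_on S r" unfolding refl_on_def using assms(1,2) by auto
  show "sym r" unfolding sym_def using assms(3) by auto
  show "trans r" unfolding trans_def using assms(4) by blast
qed (use assms(1,5,6) in auto)

definition rees_congruence :: "'a set \<Rightarrow> 'a set \<Rightarrow> ('a \<times> 'a) set" where
  "rees_congruence S I = I \<times> I \<union> Id_on S"

definition left_translation_kernel :: "'a set \<Rightarrow> ('a \<Rightarrow> 'a \<Rightarrow> 'a) \<Rightarrow> ('a \<times> 'a) set" where
  "left_translation_kernel S mult = {(x, y). x \<in> S \<and> y \<in> S \<and> (\<forall>t\<in>S. mult x t = mult y t)}"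

definition pair_congruence :: "'a set \<Rightarrow> 'a \<Rightarrow> 'a \<Rightarrow> ('a \<times> 'a) set" where
  "pair_congruence S a b = Id_on S \<union> {(a, b), (b, a)}"

lemma congruence_on_rees_congruence:
  assumes "semigroup_on S mult" "I \<subseteq> S"
    and "\<forall>x\<in>I. \<forall>s\<in>S. mult s x \<in> I \<and> mult x s \<in> I"
  shows "congruence_on S mult (rees_congruence S I)"
  using assms unfolding rees_congruence_def semigroup_on_def
  by (intro congruence_onI) (auto simp: Id_on_def)

lemma congruence_on_left_translation_kernel:
  assumes "semigroup_on S mult"
  shows "congruence_on S mult (left_translation_kernel S mult)"
proof (rule congruence_onI)
  from assms have closed: "\<And>x y. x \<in> S \<Longrightarrow> y \<in> S \<Longrightarrow> mult x y \<in> S"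
    and assoc: "\<And>x y w. x \<in> S \<Longrightarrow> y \<in> S \<Longrightarrow> w \<in> S \<Longrightarrow> mult (mult x y) w = mult x (mult y w)"
    unfolding semigroup_on_def by auto
  fix a b s assume ab: "(a, b) \<in> left_translation_kernel S mult" and s: "s \<in> S"
  then have a: "a \<in> S" and b: "b \<in> S" and same: "\<And>t. t \<in> S \<Longrightarrow> mult a t = mult b t"
    unfolding left_translation_kernel_def by auto
  have "mult (mult s a) t = mult (mult s b) t" if t: "t \<in> S" for t
    using assoc[OF s a t] assoc[OF s b t] same[OF t] by simp
  then show "(mult s a, mult s b) \<in> left_translation_kernel S mult"
    using closed a b s unfolding left_translation_kernel_def by blast
  have "mult (mult a s) t = mult (mult b s) t" if t: "t \<in> S" for t
    using assoc[OF a s t] assoc[OF b s t] same[OF closed[OF s t]] by simp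
  then show "(mult a s, mult b s) \<in> left_translation_kernel S mult"
    using closed a b s unfolding left_translation_kernel_def by blast
qed (auto simp: left_translation_kernel_def)

lemma pair_congruence_image:
  assumes "(x, y) \<in> pair_congruence S a b" "a \<in> S" "b \<in> S" "f ` S \<subseteq> S"
    and "f a = f b \<or> {f a, f b} = {a, b}"
  shows "(f x, f y) \<in> pair_congruence S a b"
  using assms by (auto simp: pair_congruence_def doubleton_eq_iff)

lemma congruence_on_pair_congruence:
  assumes "semigroup_on S mult" "a \<in> S" "b \<in> S"
    and "\<And>s. s \<in> S \<Longrightarrow> mult s a = mult s b \<or> {mult s a, mult s b} = {a, b}"
    and "\<And>s. s \<in> S \<Longrightarrow> mult a s = mult b s \<or> {mult a s, mult b s} = {a, b}"
  shows "congruence_on S mult (pair_congruence S a b)"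
proof (rule congruence_onI)
  fix x y s assume xy: "(x, y) \<in> pair_congruence S a b" and s: "s \<in> S"
  with assms(1) have "mult s ` S \<subseteq> S" "(\<lambda>x. mult x s) ` S \<subseteq> S"
    unfolding semigroup_on_def by auto
  from pair_congruence_image[OF xy assms(2,3) this(1) assms(4)[OF s]]
    pair_congruence_image[OF xy assms(2,3) this(2)] assms(5)[OF s]
  show "(mult s x, mult s y) \<in> pair_congruence S a b"
    and "(mult x s, mult y s) \<in> pair_congruence S a b" by simp_all
qed (use assms(2,3) in \<open>auto simp: pair_congruence_def\<close>)

lemma T2R_swap: "T2R S mult S0 z u v \<Longrightarrow> T2R S mult S0 z v u"
  unfolding T2R_def by (auto simp: insert_commute)

lemma T2R_left_unit_transfer:
  assumes "T2R S mult S0 z u v" "b \<in> S0" "mult u b = b"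
  shows "mult v b = b"
proof -
  from assms(1,2) have vu: "mult v u = u" and "u \<in> S" "v \<in> S" "b \<in> S"
    and "semigroup_on S mult"
    unfolding T2R_def delta_semigroup_def by auto
  have "mult v (mult u b) = mult (mult v u) b"
    using \<open>semigroup_on S mult\<close> \<open>u \<in> S\<close> \<open>v \<in> S\<close> \<open>b \<in> S\<close>
    unfolding semigroup_on_def by simp
  then show ?thesis using vu assms(3) by simp
qed

lemma T2R_zero_left_zero:
  assumes "T2R S mult S0 z u v" "t \<in> S"
  shows "mult z t = z"
proof -
  from assms have zt: "mult z t \<in> S0" and "z \<in> S" "mult z z = z"
    and zero: "\<And>x. x \<in> S0 \<Longrightarrow> mult z x = z" and "semigroup_on S mult"
    unfolding T2R_def delta_semigroup_def by auto
  then have "mult z t = mult z (mult z t)"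
    using assms(2) unfolding semigroup_on_def by metis
  also have "\<dots> = z" using zero[OF zt] .
  finally show ?thesis .
qed

lemma T2R_ideal_annihilates:
  assumes T2R: "T2R S mult S0 z u v"
    and units: "\<And>b. b \<in> S0 \<Longrightarrow> mult u b = b \<and> mult v b = b"
    and "b \<in> S0" "t \<in> S"
  shows "mult b t = z"
proof -
  from T2R have sg: "semigroup_on S mult" and S: "S = S0 \<union> {u, v}"
    and chain: "\<And>r1 r2. congruence_on S mult r1 \<Longrightarrow> congruence_on S mult r2 \<Longrightarrow> r1 \<subseteq> r2 \<or> r2 \<subseteq> r1"
    and ideal: "\<forall>x\<in>S0. \<forall>s\<in>S. mult s x \<in> S0 \<and> mult x s \<in> S0"
    and "z \<in> S0" "u \<notin> S0" "u \<noteq> v"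
    and right_zero: "\<forall>x\<in>{u, v}. \<forall>y\<in>{u, v}. mult x y = y"
    unfolding T2R_def delta_semigroup_def by auto
  have "(u, v) \<in> left_translation_kernel S mult"
    using S units right_zero by (auto simp: left_translation_kernel_def)
  moreover have "(u, v) \<notin> rees_congruence S S0"
    using \<open>u \<notin> S0\<close> \<open>u \<noteq> v\<close> by (auto simp: rees_congruence_def)
  moreover have "congruence_on S mult (rees_congruence S S0)"
    using sg S ideal by (intro congruence_on_rees_congruence) auto
  ultimately have "rees_congruence S S0 \<subseteq> left_translation_kernel S mult"
    using chain congruence_on_left_translation_kernel[OF sg] by blast
  moreover have "(b, z) \<in> rees_congruence S S0"
    using \<open>b \<in> S0\<close> \<open>z \<in> S0\<close> by (auto simp: rees_congruence_def)
  ultimately have "mult b t = mult z t"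
    using \<open>t \<in> S\<close> by (auto simp: left_translation_kernel_def)
  then show ?thesis using T2R_zero_left_zero[OF T2R \<open>t \<in> S\<close>] by simp
qed

lemma T2R_not_left_units:
  assumes T2R: "T2R S mult S0 z u v"
  shows "\<not> (\<forall>b\<in>S0. mult u b = b \<and> mult v b = b)"
proof
  assume units: "\<forall>b\<in>S0. mult u b = b \<and> mult v b = b"
  from T2R have sg: "semigroup_on S mult" and S: "S = S0 \<union> {u, v}"
    and chain: "\<And>r1 r2. congruence_on S mult r1 \<Longrightarrow> congruence_on S mult r2 \<Longrightarrow> r1 \<subseteq> r2 \<or> r2 \<subseteq> r1"
    and "z \<in> S0" "u \<notin> S0" "v \<notin> S0" "u \<noteq> v"
    and right_zero: "\<forall>x\<in>{u, v}. \<forall>y\<in>{u, v}. mult x y = y"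
    and "\<exists>b\<in>S0. b \<noteq> z"
    unfolding T2R_def delta_semigroup_def by auto
  then obtain b where "b \<in> S0" "b \<noteq> z" by blast
  have annihilates: "\<And>x t. x \<in> S0 \<Longrightarrow> t \<in> S \<Longrightarrow> mult x t = z"
    using T2R_ideal_annihilates[OF T2R] units by blast
  have "congruence_on S mult (pair_congruence S z b)"
    using \<open>z \<in> S0\<close> \<open>b \<in> S0\<close> units annihilates S
    by (intro congruence_on_pair_congruence[OF sg]) auto
  moreover have "congruence_on S mult (pair_congruence S u v)"
    using units annihilates right_zero S
    by (intro congruence_on_pair_congruence[OF sg]) auto
  moreover have "(z, b) \<notin> pair_congruence S u v" "(u, v) \<notin> pair_congruence S z b"
    using \<open>b \<noteq> z\<close> \<open>u \<noteq> v\<close> \<open>z \<in> S0\<close> \<open>u \<notin> S0\<close> \<open>v \<notin> S0\<close>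
    by (auto simp: pair_congruence_def)
  ultimately show False
    using chain \<open>b \<in> S0\<close> \<open>z \<in> S0\<close> S by (fastforce simp: pair_congruence_def)
qed

theorem proposition6:
  assumes "T2R S mult S0 z u v"
  shows "\<exists>b\<in>S0. mult u b \<noteq> b \<and> mult v b \<noteq> b"
proof (rule ccontr)
  assume "\<not> ?thesis"
  then have "\<forall>b\<in>S0. mult u b = b \<and> mult v b = b"
    using T2R_left_unit_transfer[OF assms] T2R_left_unit_transfer[OF T2R_swap[OF assms]]
    by blast
  with T2R_not_left_units[OF assms] show False by blast
qed

end
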